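(* Let $T>0$ and $\mu>0$. For all $u,w\in H^1_{0,}(0,T)$, \[ b_\mu(u,\mathsf{T}_\mu w) = \int_0^T u'(t)w'(t)\,dt + \mu \int_0^T u(t)w(t)\,dt . \] In particular, for all $u,w\in H^1_{0,}(0,T)$, \[ b_\mu(u,\mathsf{T}_\mu w)\le \|u\|_{H^1_\mu}\|w\|_{H^1_\mu}\quad\text{and}\quad b_\mu(u,\mathsf{T}_\mu u) = \|u\|_{H^1_\mu}^2 . \]
   Context: All functions are real valued. $H^1_{0,}(0,T):=\{v\in H^1(0,T): v(0)=0\}$, $H^1_{,0}(0,T):=\{v\in H^1(0,T): v(T)=0\}$. The bilinear form $b_\mu:H^1_{0,}(0,T)\times H^1_{,0}(0,T)\to\mathbb{R}$ is \[ b_\mu(u,v):=\int_0^T\big[-u'(t)v'(t)+\mu\, u(t)v(t)\big]\,dt . \] $\|w\|_{H^1_\mu}:=(\|w'\|_{L^2(0,T)}^2+\mu\|w\|_{L^2(0,T)}^2)^{1/2}$. For $w\in H^1_{0,}(0,T)$, \[ (\mathsf{T}_\mu w)(t) := \int_t^T\Big[\cos(\sqrt{\mu}(t-s))\,w'(s) -\sqrt{\mu}\,\sin(\sqrt{\mu}(t-s))\,w(s)\Big]\, ds,\qquad t\in[0,T], \] which belongs to $H^1_{,0}(0,T)$. *)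

theory Defs
  imports "HOL-Analysis.Analysis"
begin

text \<open>H^1(0,T): functions that on [0,T] are the indefinite integral of an L^2(0,T) function
  (absolutely continuous representative). g is then the (a.e. unique) weak derivative.\<close>
definition has_H1_deriv :: "real \<Rightarrow> (real \<Rightarrow> real) \<Rightarrow> (real \<Rightarrow> real) \<Rightarrow> bool" where
  "has_H1_deriv T v g \<longleftrightarrow>
     g \<in> borel_measurable lborel \<and>
     set_integrable lborel {0..T} (\<lambda>t. (g t)^2) \<and>
     (\<forall>t\<in>{0..T}. v t = v 0 + (LINT s:{0..t}|lborel. g s))"

definition H1 :: "real \<Rightarrow> (real \<Rightarrow> real) \<Rightarrow> bool" where
  "H1 T v \<longleftrightarrow> (\<exists>g. has_H1_deriv T v g)"

definition H1_0l :: "real \<Rightarrow> (real \<Rightarrow> real) \<Rightarrow> bool" where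
  "H1_0l T v \<longleftrightarrow> H1 T v \<and> v 0 = 0"

definition H1_0r :: "real \<Rightarrow> (real \<Rightarrow> real) \<Rightarrow> bool" where
  "H1_0r T v \<longleftrightarrow> H1 T v \<and> v T = 0"

text \<open>the (weak) derivative v' (a representative; all integrals below are independent of the choice)\<close>
definition dH1 :: "real \<Rightarrow> (real \<Rightarrow> real) \<Rightarrow> real \<Rightarrow> real" where
  "dH1 T v = (SOME g. has_H1_deriv T v g)"

definition b_mu :: "real \<Rightarrow> real \<Rightarrow> (real \<Rightarrow> real) \<Rightarrow> (real \<Rightarrow> real) \<Rightarrow> real" where
  "b_mu T \<mu> u v = (LINT t:{0..T}|lborel. - dH1 T u t * dH1 T v t + \<mu> * u t * v t)"

definition H1mu_norm :: "real \<Rightarrow> real \<Rightarrow> (real \<Rightarrow> real) \<Rightarrow> real" where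
  "H1mu_norm T \<mu> w = sqrt ((LINT t:{0..T}|lborel. (dH1 T w t)^2) + \<mu> * (LINT t:{0..T}|lborel. (w t)^2))"

definition T_mu :: "real \<Rightarrow> real \<Rightarrow> (real \<Rightarrow> real) \<Rightarrow> real \<Rightarrow> real" where
  "T_mu T \<mu> w t = (LINT s:{t..T}|lborel.
      cos (sqrt \<mu> * (t - s)) * dH1 T w s - sqrt \<mu> * sin (sqrt \<mu> * (t - s)) * w s)"

end

theory Submission
  imports Defs
begin

(* Write k = sqrt mu and z = T_mu w. By the angle-sum formulas,
   z(t) = cos(kt) A(t) + sin(kt) B(t) with A, B integrals over [t,T], so the product rule gives
   z' = -w' + h with h = k (cos(kt) B - sin(kt) A), h(T) = 0 and h' = mu (w - z).
   Hence b_mu(u,z) = int u'w' - int u'h + mu int u z, and integration by parts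
   (u(0) = 0, h(T) = 0) turns int u'h into -mu int u (w - z), which cancels the last term.
   The inequality is then Cauchy-Schwarz for the inner product of H^1_mu.

   Absolute continuity is handled with Lebesgue integrals on the whole line: the product rule
   comes from Fubini on the triangle {s <= t}, and a derivative is unique almost everywhere
   because it is determined by its integrals over half-lines. *)

lemma integrable_mult_bounded:
  fixes f g :: "'a \<Rightarrow> real"
  assumes f: "integrable M f" and g: "g \<in> borel_measurable M" and bound: "\<And>x. \<bar>g x\<bar> \<le> C"
  shows "integrable M (\<lambda>x. f x * g x)"
proof (rule Bochner_Integration.integrable_bound)
  show "integrable M (\<lambda>x. C * f x)" using f by simp
  show "(\<lambda>x. f x * g x) \<in> borel_measurable M" using f g by measurable
  have "\<bar>f x * g x\<bar> \<le> \<bar>C * f x\<bar>" for x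
    unfolding abs_mult using bound[of x]
    by (subst mult.commute, intro mult_left_mono) (auto intro: order_trans[OF _ abs_ge_self])
  then show "AE x in M. norm (f x * g x) \<le> norm (C * f x)" by simp
qed

lemma integrable_mult_square_integrable:
  fixes f g :: "'a \<Rightarrow> real"
  assumes [measurable]: "f \<in> borel_measurable M" "g \<in> borel_measurable M"
    and "integrable M (\<lambda>x. (f x)\<^sup>2)" "integrable M (\<lambda>x. (g x)\<^sup>2)"
  shows "integrable M (\<lambda>x. f x * g x)"
proof (rule Bochner_Integration.integrable_bound)
  show "integrable M (\<lambda>x. (f x)\<^sup>2 + (g x)\<^sup>2)" using assms(3,4) by simp
  have "\<bar>f x * g x\<bar> \<le> (f x)\<^sup>2 + (g x)\<^sup>2" for x
  proof -
    have "2 * (\<bar>f x\<bar> * \<bar>g x\<bar>) \<le> (f x)\<^sup>2 + (g x)\<^sup>2"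
      using sum_squares_bound[of "\<bar>f x\<bar>" "\<bar>g x\<bar>"] by simp
    moreover have "0 \<le> \<bar>f x\<bar> * \<bar>g x\<bar>" by simp
    ultimately show ?thesis unfolding abs_mult by linarith
  qed
  then show "AE x in M. norm (f x * g x) \<le> norm ((f x)\<^sup>2 + (g x)\<^sup>2)" by simp
qed measurable

section \<open>Indefinite integrals on the real line\<close>

definition indef_integral :: "(real \<Rightarrow> real) \<Rightarrow> real \<Rightarrow> real" where
  "indef_integral f t = (\<integral>s. f s * indicator {..t} s \<partial>lborel)"

lemma sets_lborel_pair_le: "{p::real \<times> real. snd p \<le> fst p} \<in> sets (lborel \<Otimes>\<^sub>M lborel)"
  and sets_lborel_pair_less: "{p::real \<times> real. fst p < snd p} \<in> sets (lborel \<Otimes>\<^sub>M lborel)"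
proof -
  have "closed {p::real \<times> real. snd p \<le> fst p}"
    by (intro closed_Collect_le continuous_intros)
  then show "{p::real \<times> real. snd p \<le> fst p} \<in> sets (lborel \<Otimes>\<^sub>M lborel)"
    by (metis lborel_prod sets_lborel borel_closed)
  have "open {p::real \<times> real. fst p < snd p}"
    by (intro open_Collect_less continuous_intros)
  then show "{p::real \<times> real. fst p < snd p} \<in> sets (lborel \<Otimes>\<^sub>M lborel)"
    by (metis lborel_prod sets_lborel borel_open)
qed

lemma borel_measurable_indef_integral [measurable]:
  assumes [measurable]: "f \<in> borel_measurable borel"
  shows "indef_integral f \<in> borel_measurable borel"
proof -
  have "indef_integral f = (\<lambda>t. \<integral>s. f s * (if s \<le> t then 1 else 0) \<partial>lborel)"
    unfolding indef_integral_def by (auto simp: indicator_def of_bool_def fun_eq_iff)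
  moreover have [measurable]: "{p::real \<times> real. snd p \<le> fst p} \<in> sets (borel \<Otimes>\<^sub>M lborel)"
    using sets_lborel_pair_le by (metis sets_lborel sets_pair_measure_cong)
  ultimately show ?thesis
    by (simp only:) (intro lborel.borel_measurable_lebesgue_integral, measurable)
qed

lemma abs_indef_integral_le:
  assumes "integrable lborel f"
  shows "\<bar>indef_integral f t\<bar> \<le> (\<integral>s. \<bar>f s\<bar> \<partial>lborel)"
proof -
  have "\<bar>indef_integral f t\<bar> \<le> (\<integral>s. \<bar>f s * indicator {..t} s\<bar> \<partial>lborel)"
    unfolding indef_integral_def by (rule integral_abs_bound)
  also have "\<dots> \<le> (\<integral>s. \<bar>f s\<bar> \<partial>lborel)"
    using assms by (intro integral_mono integrable_abs integrable_real_mult_indicator)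
      (auto simp: indicator_def)
  finally show ?thesis .
qed

lemma indef_integral_lessThan:
  assumes "integrable lborel f"
  shows "(\<integral>s. f s * indicator {..<t} s \<partial>lborel) = indef_integral f t"
proof -
  have [measurable]: "f \<in> borel_measurable borel" using assms by auto
  show ?thesis
    unfolding indef_integral_def using AE_lborel_singleton[of t]
    by (intro integral_cong_AE) (auto elim!: eventually_mono simp: indicator_def)
qed

lemma indef_integral_add:
  assumes "integrable lborel f" "integrable lborel g"
  shows "indef_integral (\<lambda>x. f x + g x) t = indef_integral f t + indef_integral g t"
  using assms unfolding indef_integral_def
  by (simp add: distrib_right integrable_real_mult_indicator)

lemma indef_integral_diff:
  assumes "integrable lborel f" "integrable lborel g"
  shows "indef_integral (\<lambda>x. f x - g x) t = indef_integral f t - indef_integral g t"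
  using assms unfolding indef_integral_def
  by (simp add: left_diff_distrib integrable_real_mult_indicator)

lemma indef_integral_cmult: "indef_integral (\<lambda>x. c * f x) t = c * indef_integral f t"
  unfolding indef_integral_def by (simp add: mult.assoc)

lemma indef_integral_uminus: "indef_integral (\<lambda>x. - f x) t = - indef_integral f t"
  unfolding indef_integral_def by simp

lemma indef_integral_beyond:
  assumes "\<And>x. x \<notin> {0..T} \<Longrightarrow> f x = 0" "T \<le> t"
  shows "indef_integral f t = integral\<^sup>L lborel f"
  unfolding indef_integral_def
  using assms by (intro Bochner_Integration.integral_cong) (auto simp: indicator_def)

text \<open>The two integrals on the left are the double integrals of \<open>f x * g y\<close> over the parts
  \<open>y \<le> x\<close> and \<open>x < y\<close> of the plane.\<close>

lemma integral_mult_indef_integral: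
  fixes f g :: "real \<Rightarrow> real"
  assumes f: "integrable lborel f" and g: "integrable lborel g"
  shows "(\<integral>x. f x * indef_integral g x \<partial>lborel) + (\<integral>y. g y * indef_integral f y \<partial>lborel)
       = integral\<^sup>L lborel f * integral\<^sup>L lborel g"
proof -
  have [measurable]: "f \<in> borel_measurable lborel" "g \<in> borel_measurable lborel"
    using f g by auto
  note [measurable] = sets_lborel_pair_le sets_lborel_pair_less
  define Q where "Q = (\<lambda>p::real \<times> real. f (fst p) * g (snd p))"
  define Q1 where "Q1 = (\<lambda>p. f (fst p) * (g (snd p) * indicator {p. snd p \<le> fst p} p))"
  define Q2 where "Q2 = (\<lambda>p. g (snd p) * (f (fst p) * indicator {p. fst p < snd p} p))"
  have [measurable]: "Q \<in> borel_measurable (lborel \<Otimes>\<^sub>M lborel)"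
    "Q1 \<in> borel_measurable (lborel \<Otimes>\<^sub>M lborel)" "Q2 \<in> borel_measurable (lborel \<Otimes>\<^sub>M lborel)"
    unfolding Q_def Q1_def Q2_def by measurable
  have Q: "integrable (lborel \<Otimes>\<^sub>M lborel) Q"
  proof (rule lborel_pair.Fubini_integrable)
    have "(\<lambda>x. \<integral>y. norm (Q (x, y)) \<partial>lborel) = (\<lambda>x. \<bar>f x\<bar> * (\<integral>y. \<bar>g y\<bar> \<partial>lborel))"
      by (auto simp: Q_def abs_mult fun_eq_iff)
    then show "integrable lborel (\<lambda>x. \<integral>y. norm (Q (x, y)) \<partial>lborel)"
      using f by simp
    show "AE x in lborel. integrable lborel (\<lambda>y. Q (x, y))"
      using g by (simp add: Q_def)
  qed measurable
  have Q1: "integrable (lborel \<Otimes>\<^sub>M lborel) Q1" and Q2: "integrable (lborel \<Otimes>\<^sub>M lborel) Q2"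
    by (rule Bochner_Integration.integrable_bound[OF Q],
        auto simp: Q_def Q1_def Q2_def indicator_def abs_mult)+
  have "Q = (\<lambda>p. Q1 p + Q2 p)"
    by (auto simp: Q_def Q1_def Q2_def indicator_def fun_eq_iff)
  then have "integral\<^sup>L (lborel \<Otimes>\<^sub>M lborel) Q
      = integral\<^sup>L (lborel \<Otimes>\<^sub>M lborel) Q1 + integral\<^sup>L (lborel \<Otimes>\<^sub>M lborel) Q2"
    using Q1 Q2 by simp
  moreover have "integral\<^sup>L (lborel \<Otimes>\<^sub>M lborel) Q = integral\<^sup>L lborel f * integral\<^sup>L lborel g"
    using lborel_pair.integral_fst'[OF Q] by (simp add: Q_def)
  moreover have "integral\<^sup>L (lborel \<Otimes>\<^sub>M lborel) Q1 = (\<integral>x. f x * indef_integral g x \<partial>lborel)"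
    using lborel_pair.integral_fst'[OF Q1] by (simp add: Q1_def indef_integral_def indicator_def)
  moreover have "integral\<^sup>L (lborel \<Otimes>\<^sub>M lborel) Q2 = (\<integral>y. g y * indef_integral f y \<partial>lborel)"
  proof -
    have "integral\<^sup>L (lborel \<Otimes>\<^sub>M lborel) Q2 = (\<integral>y. (\<integral>x. Q2 (x, y) \<partial>lborel) \<partial>lborel)"
      using lborel_pair.integral_snd[of "\<lambda>x y. Q2 (x, y)"] Q2 by simp
    also have "\<dots> = (\<integral>y. g y * (\<integral>x. f x * indicator {..<y} x \<partial>lborel) \<partial>lborel)"
      by (simp add: Q2_def indicator_def)
    finally show ?thesis by (simp add: indef_integral_lessThan[OF f])
  qed
  ultimately show ?thesis by simp
qed

lemma indef_integral_mult_indef_integral: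
  assumes f: "integrable lborel f" and g: "integrable lborel g"
  shows "indef_integral (\<lambda>x. f x * indef_integral g x) t + indef_integral (\<lambda>x. g x * indef_integral f x) t
       = indef_integral f t * indef_integral g t"
proof -
  define ft where "ft = (\<lambda>x. f x * indicator {..t} x)"
  define gt where "gt = (\<lambda>x. g x * indicator {..t} x)"
  have ft: "integrable lborel ft" and gt: "integrable lborel gt"
    unfolding ft_def gt_def using f g by (simp_all add: integrable_real_mult_indicator)
  have truncate: "indef_integral (\<lambda>s. h s * indicator {..t} s) x = indef_integral h x" if "x \<le> t" for h x
    unfolding indef_integral_def using that
    by (intro Bochner_Integration.integral_cong) (auto simp: indicator_def)
  have "(\<integral>x. ft x * indef_integral gt x \<partial>lborel) = indef_integral (\<lambda>x. f x * indef_integral g x) t"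
    unfolding indef_integral_def[of "\<lambda>x. f x * indef_integral g x"]
  proof (rule Bochner_Integration.integral_cong[OF refl])
    fix x show "ft x * indef_integral gt x = f x * indef_integral g x * indicator {..t} x"
      using truncate[of x g] by (cases "x \<le> t") (simp_all add: ft_def gt_def)
  qed
  moreover have "(\<integral>x. gt x * indef_integral ft x \<partial>lborel) = indef_integral (\<lambda>x. g x * indef_integral f x) t"
    unfolding indef_integral_def[of "\<lambda>x. g x * indef_integral f x"]
  proof (rule Bochner_Integration.integral_cong[OF refl])
    fix x show "gt x * indef_integral ft x = g x * indef_integral f x * indicator {..t} x"
      using truncate[of x f] by (cases "x \<le> t") (simp_all add: ft_def gt_def)
  qed
  ultimately show ?thesis
    using integral_mult_indef_integral[OF ft gt] by (simp add: indef_integral_def ft_def gt_def)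
qed

text \<open>The positive and negative parts of \<open>h\<close> define measures that agree on all half-lines.\<close>

lemma AE_zero_if_integral_greaterThan_zero:
  fixes h :: "real \<Rightarrow> real"
  assumes h: "integrable lborel h" and zero: "\<And>x. (\<integral>y. h y * indicator {x<..} y \<partial>lborel) = 0"
  shows "AE x in lborel. h x = 0"
proof -
  define hp where "hp = (\<lambda>x. max 0 (h x))"
  define hn where "hn = (\<lambda>x. max 0 (- h x))"
  have hp: "integrable lborel hp" and hn: "integrable lborel hn"
    unfolding hp_def hn_def using h by auto
  have [measurable]: "hp \<in> borel_measurable borel" "hn \<in> borel_measurable borel"
    using hp hn by auto
  have nonneg: "0 \<le> hp y" "0 \<le> hn y" for y unfolding hp_def hn_def by auto
  have h_eq: "h y = hp y - hn y" for y unfolding hp_def hn_def by auto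
  have emeasure_density: "emeasure (density lborel k) {x<..} = (\<integral>y. k y * indicator {x<..} y \<partial>lborel)"
    if k: "integrable lborel k" "\<And>y. 0 \<le> k y" for k :: "real \<Rightarrow> real" and x :: real
  proof -
    have [measurable]: "k \<in> borel_measurable borel" using k by auto
    have "emeasure (density lborel k) {x<..} = (\<integral>\<^sup>+ y. ennreal (k y * indicator {x<..} y) \<partial>lborel)"
      by (subst emeasure_density) (auto intro!: nn_integral_cong simp: indicator_def)
    also have "\<dots> = ennreal (\<integral>y. k y * indicator {x<..} y \<partial>lborel)"
      using k by (intro nn_integral_eq_integral) (auto simp: integrable_real_mult_indicator)
    finally show ?thesis .
  qed
  have "(\<integral>y. hp y * indicator {x<..} y \<partial>lborel) = (\<integral>y. hn y * indicator {x<..} y \<partial>lborel)" for x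
    using zero[of x] hp hn
    by (simp add: h_eq left_diff_distrib integrable_real_mult_indicator)
  then have "density lborel hp = density lborel hn"
    by (intro measure_eqI_lessThan) (auto simp: emeasure_density hp hn nonneg)
  then have "AE y in lborel. ennreal (hp y) = ennreal (hn y)"
    by (intro sigma_finite_measure.density_unique[OF sigma_finite_lborel]) auto
  then show ?thesis
    by (rule eventually_mono) (simp add: h_eq nonneg)
qed

section \<open>Absolutely continuous functions on an interval\<close>

text \<open>The derivative is extended by \<open>0\<close> outside \<open>[0,T]\<close>, so that all integrals can be taken
  over the whole line; \<open>F\<close> itself is unconstrained there.\<close>

definition has_ac_deriv :: "real \<Rightarrow> (real \<Rightarrow> real) \<Rightarrow> (real \<Rightarrow> real) \<Rightarrow> bool" where
  "has_ac_deriv T F f \<longleftrightarrow> integrable lborel f \<and> (\<forall>x. x \<notin> {0..T} \<longrightarrow> f x = 0) \<and>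
     (\<forall>t\<in>{0..T}. F t = F 0 + indef_integral f t)"

lemma has_ac_derivD:
  assumes "has_ac_deriv T F f"
  shows "integrable lborel f" "\<And>x. x \<notin> {0..T} \<Longrightarrow> f x = 0"
    "\<And>t. t \<in> {0..T} \<Longrightarrow> F t = F 0 + indef_integral f t"
  using assms unfolding has_ac_deriv_def by blast+

lemma has_ac_deriv_bounded_representative:
  assumes "has_ac_deriv T F f"
  obtains G C where "G \<in> borel_measurable borel" "\<And>x. \<bar>G x\<bar> \<le> C" "\<And>t. t \<in> {0..T} \<Longrightarrow> F t = G t"
proof
  note f = has_ac_derivD(1)[OF assms]
  then have [measurable]: "f \<in> borel_measurable borel" by auto
  show "(\<lambda>t. F 0 + indef_integral f t) \<in> borel_measurable borel" by measurable
  show "\<bar>F 0 + indef_integral f x\<bar> \<le> \<bar>F 0\<bar> + (\<integral>s. \<bar>f s\<bar> \<partial>lborel)" for x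
    using abs_indef_integral_le[OF f, of x] by linarith
  show "F t = F 0 + indef_integral f t" if "t \<in> {0..T}" for t
    using has_ac_derivD(3)[OF assms that] .
qed

lemma integrable_mult_has_ac_deriv:
  assumes G: "has_ac_deriv T G g" and f: "integrable lborel f" "\<And>x. x \<notin> {0..T} \<Longrightarrow> f x = 0"
  shows "integrable lborel (\<lambda>x. f x * G x)"
proof -
  obtain R C where R: "R \<in> borel_measurable borel" "\<And>x. \<bar>R x\<bar> \<le> C" "\<And>t. t \<in> {0..T} \<Longrightarrow> G t = R t"
    using has_ac_deriv_bounded_representative[OF G] by blast
  have "integrable lborel (\<lambda>x. f x * R x)"
    using R(1,2) by (intro integrable_mult_bounded[OF f(1)]) auto
  moreover have "f x * R x = f x * G x" for x
    using f(2) R(3) by (cases "x \<in> {0..T}") auto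
  ultimately show ?thesis by simp
qed

lemma integrable_has_ac_deriv_mult_indicator:
  assumes F: "has_ac_deriv T F f" and G: "has_ac_deriv T G g"
  shows "integrable lborel (\<lambda>x. F x * G x * indicator {0..T} x)"
proof -
  have "integrable lborel (\<lambda>x. indicator {0..T} x * F x)"
    using borel_integrable_atLeastAtMost[of 0 T "\<lambda>_. 1"]
    by (intro integrable_mult_has_ac_deriv[OF F]) auto
  then have "integrable lborel (\<lambda>x. indicator {0..T} x * F x * G x)"
    by (rule integrable_mult_has_ac_deriv[OF G]) auto
  then show ?thesis by (simp add: ac_simps)
qed

lemma has_ac_deriv_cong:
  assumes "has_ac_deriv T F f" "\<And>t. t \<in> {0..T} \<Longrightarrow> F' t = F t" "\<And>s. f' s = f s"
  shows "has_ac_deriv T F' f'"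
proof -
  have "f' = f" using assms(3) by auto
  moreover have "F' t = F' 0 + indef_integral f t" if "t \<in> {0..T}" for t
    using that assms(2)[OF that] assms(2)[of 0] has_ac_derivD(3)[OF assms(1) that] by simp
  ultimately show ?thesis using assms(1) unfolding has_ac_deriv_def by blast
qed

lemma has_ac_deriv_add:
  assumes F: "has_ac_deriv T F f" and G: "has_ac_deriv T G g"
  shows "has_ac_deriv T (\<lambda>t. F t + G t) (\<lambda>s. f s + g s)"
  unfolding has_ac_deriv_def
proof (intro conjI ballI allI impI)
  note f = has_ac_derivD[OF F] and g = has_ac_derivD[OF G]
  show "integrable lborel (\<lambda>s. f s + g s)" using f(1) g(1) by simp
  show "f x + g x = 0" if "x \<notin> {0..T}" for x using f(2)[OF that] g(2)[OF that] by simp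
  show "F t + G t = F 0 + G 0 + indef_integral (\<lambda>s. f s + g s) t" if "t \<in> {0..T}" for t
    using f(3)[OF that] g(3)[OF that] indef_integral_add[OF f(1) g(1)] by simp
qed

lemma has_ac_deriv_cmult:
  assumes F: "has_ac_deriv T F f"
  shows "has_ac_deriv T (\<lambda>t. c * F t) (\<lambda>s. c * f s)"
  unfolding has_ac_deriv_def
proof (intro conjI ballI allI impI)
  note f = has_ac_derivD[OF F]
  show "integrable lborel (\<lambda>s. c * f s)" using f(1) by simp
  show "c * f x = 0" if "x \<notin> {0..T}" for x using f(2)[OF that] by simp
  show "c * F t = c * F 0 + indef_integral (\<lambda>s. c * f s) t" if "t \<in> {0..T}" for t
    using f(3)[OF that] by (simp add: indef_integral_cmult distrib_left)
qed

lemma has_ac_deriv_diff: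
  assumes F: "has_ac_deriv T F f" and G: "has_ac_deriv T G g"
  shows "has_ac_deriv T (\<lambda>t. F t - G t) (\<lambda>s. f s - g s)"
  using has_ac_deriv_add[OF F has_ac_deriv_cmult[OF G, of "-1"]] by simp

lemma has_ac_deriv_mult:
  assumes F: "has_ac_deriv T F f" and G: "has_ac_deriv T G g"
  shows "has_ac_deriv T (\<lambda>t. F t * G t) (\<lambda>s. f s * G s + F s * g s)"
proof -
  note f = has_ac_derivD(1,2)[OF F] and g = has_ac_derivD(1,2)[OF G]
  have fG: "integrable lborel (\<lambda>s. f s * G s)"
    by (rule integrable_mult_has_ac_deriv[OF G f])
  have Fg: "integrable lborel (\<lambda>s. F s * g s)"
    using integrable_mult_has_ac_deriv[OF F g] by (simp add: mult.commute)
  have fg: "integrable lborel (\<lambda>s. f s * indef_integral g s)"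
    and gf: "integrable lborel (\<lambda>s. g s * indef_integral f s)"
    using f(1) g(1) abs_indef_integral_le[OF f(1)] abs_indef_integral_le[OF g(1)]
    by (auto intro!: integrable_mult_bounded)
  have "(\<lambda>s. f s * G s + F s * g s)
      = (\<lambda>s. (G 0 * f s + f s * indef_integral g s) + (F 0 * g s + g s * indef_integral f s))"
  proof
    fix s
    show "f s * G s + F s * g s
      = (G 0 * f s + f s * indef_integral g s) + (F 0 * g s + g s * indef_integral f s)"
      using has_ac_derivD(3)[OF F, of s] has_ac_derivD(3)[OF G, of s] f(2) g(2)
      by (cases "s \<in> {0..T}") (simp_all add: algebra_simps)
  qed
  then have expand: "indef_integral (\<lambda>s. f s * G s + F s * g s) t
      = G 0 * indef_integral f t + indef_integral (\<lambda>s. f s * indef_integral g s) t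
        + (F 0 * indef_integral g t + indef_integral (\<lambda>s. g s * indef_integral f s) t)" for t
    using f(1) g(1) fg gf by (simp add: indef_integral_add indef_integral_cmult)
  have prod: "F t * G t = F 0 * G 0 + indef_integral (\<lambda>s. f s * G s + F s * g s) t"
    if t: "t \<in> {0..T}" for t
  proof -
    have "F t * G t = (F 0 + indef_integral f t) * (G 0 + indef_integral g t)"
      using has_ac_derivD(3)[OF F t] has_ac_derivD(3)[OF G t] by simp
    then show ?thesis
      using expand[of t] indef_integral_mult_indef_integral[OF f(1) g(1), of t] by (simp add: algebra_simps)
  qed
  show ?thesis unfolding has_ac_deriv_def
  proof (intro conjI ballI allI impI)
    show "integrable lborel (\<lambda>s. f s * G s + F s * g s)" using fG Fg by simp
    show "f x * G x + F x * g x = 0" if "x \<notin> {0..T}" for x using f(2)[OF that] g(2)[OF that] by simp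
  qed (rule prod)
qed

lemma has_real_derivative_imp_has_ac_deriv:
  assumes "\<And>x. (\<phi> has_real_derivative \<phi>' x) (at x)" and "\<And>x. isCont \<phi>' x"
  shows "has_ac_deriv T \<phi> (\<lambda>s. \<phi>' s * indicator {0..T} s)"
  unfolding has_ac_deriv_def
proof (intro conjI ballI allI impI)
  show "integrable lborel (\<lambda>s. \<phi>' s * indicator {0..T} s)"
    using assms(2) by (intro borel_integrable_atLeastAtMost) auto
  show "\<phi>' x * indicator {0..T} x = 0" if "x \<notin> {0..T}" for x using that by simp
  fix t assume t: "t \<in> {0..T}"
  have "indef_integral (\<lambda>s. \<phi>' s * indicator {0..T} s) t = (\<integral>s. \<phi>' s * indicator {0..t} s \<partial>lborel)"
    unfolding indef_integral_def using t by (intro Bochner_Integration.integral_cong) (auto simp: indicator_def)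
  also have "\<dots> = \<phi> t - \<phi> 0"
    using t by (intro integral_FTC_Icc_real assms) auto
  finally show "\<phi> t = \<phi> 0 + indef_integral (\<lambda>s. \<phi>' s * indicator {0..T} s) t" by simp
qed

lemma has_ac_deriv_cos_mult:
  assumes "has_ac_deriv T F f"
  shows "has_ac_deriv T (\<lambda>t. cos (k * t) * F t)
           (\<lambda>s. cos (k * s) * f s - k * sin (k * s) * F s * indicator {0..T} s)"
proof -
  have "has_ac_deriv T (\<lambda>t. cos (k * t)) (\<lambda>s. - k * sin (k * s) * indicator {0..T} s)"
  proof (rule has_real_derivative_imp_has_ac_deriv)
    show "((\<lambda>t. cos (k * t)) has_real_derivative - k * sin (k * x)) (at x)" for x
      by (auto intro!: derivative_eq_intros)
    show "isCont (\<lambda>s. - k * sin (k * s)) x" for x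
      by (intro continuous_intros)
  qed
  from has_ac_deriv_mult[OF this assms] show ?thesis
    by (rule has_ac_deriv_cong) (simp_all add: algebra_simps)
qed

lemma has_ac_deriv_sin_mult:
  assumes "has_ac_deriv T F f"
  shows "has_ac_deriv T (\<lambda>t. sin (k * t) * F t)
           (\<lambda>s. sin (k * s) * f s + k * cos (k * s) * F s * indicator {0..T} s)"
proof -
  have "has_ac_deriv T (\<lambda>t. sin (k * t)) (\<lambda>s. k * cos (k * s) * indicator {0..T} s)"
  proof (rule has_real_derivative_imp_has_ac_deriv)
    show "((\<lambda>t. sin (k * t)) has_real_derivative k * cos (k * x)) (at x)" for x
      by (auto intro!: derivative_eq_intros)
    show "isCont (\<lambda>s. k * cos (k * s)) x" for x
      by (intro continuous_intros)
  qed
  from has_ac_deriv_mult[OF this assms] show ?thesis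
    by (rule has_ac_deriv_cong) (simp_all add: algebra_simps)
qed

lemma has_ac_deriv_integral_atLeastAtMost:
  assumes a: "integrable lborel a" and supp: "\<And>x. x \<notin> {0..T} \<Longrightarrow> a x = 0"
  shows "has_ac_deriv T (\<lambda>t. \<integral>s. indicator {t..T} s * a s \<partial>lborel) (\<lambda>s. - a s)"
  unfolding has_ac_deriv_def
proof (intro conjI ballI allI impI)
  show "integrable lborel (\<lambda>s. - a s)" using a by simp
  show "- a x = 0" if "x \<notin> {0..T}" for x using supp[OF that] by simp
  have tail: "(\<integral>s. indicator {t..T} s * a s \<partial>lborel) = integral\<^sup>L lborel a - indef_integral a t"
    if "0 \<le> t" for t
  proof -
    have "(\<integral>s. indicator {t..T} s * a s \<partial>lborel) = (\<integral>s. a s - a s * indicator {..<t} s \<partial>lborel)"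
      using that supp by (intro Bochner_Integration.integral_cong) (auto simp: indicator_def)
    then show ?thesis
      using a by (simp add: indef_integral_lessThan integrable_real_mult_indicator)
  qed
  have whole: "(\<integral>s. indicator {0..T} s * a s \<partial>lborel) = integral\<^sup>L lborel a"
    using supp by (intro Bochner_Integration.integral_cong) (auto simp: indicator_def)
  fix t assume "t \<in> {0..T}"
  then show "(\<integral>s. indicator {t..T} s * a s \<partial>lborel)
      = (\<integral>s. indicator {0..T} s * a s \<partial>lborel) + indef_integral (\<lambda>s. - a s) t"
    using tail[of t] whole by (simp add: indef_integral_uminus)
qed

lemma integral_has_ac_deriv:
  assumes "has_ac_deriv T F f" "0 \<le> T"
  shows "integral\<^sup>L lborel f = F T - F 0"
  using has_ac_derivD(3)[OF assms(1), of T] indef_integral_beyond[OF has_ac_derivD(2)[OF assms(1)], of T] assms(2)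
  by simp

lemma integration_by_parts_has_ac_deriv:
  assumes F: "has_ac_deriv T F f" and G: "has_ac_deriv T G g" and "0 \<le> T"
  shows "(\<integral>s. f s * G s \<partial>lborel) + (\<integral>s. F s * g s \<partial>lborel) = F T * G T - F 0 * G 0"
proof -
  have "integrable lborel (\<lambda>s. f s * G s)" "integrable lborel (\<lambda>s. g s * F s)"
    using has_ac_derivD(1,2)[OF F] has_ac_derivD(1,2)[OF G]
    by (auto intro!: integrable_mult_has_ac_deriv[OF G] integrable_mult_has_ac_deriv[OF F])
  then show ?thesis
    using integral_has_ac_deriv[OF has_ac_deriv_mult[OF F G] \<open>0 \<le> T\<close>] by (simp add: mult.commute)
qed

lemma has_ac_deriv_unique:
  assumes F: "has_ac_deriv T F f" and G: "has_ac_deriv T F g" and "0 \<le> T"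
  shows "AE x in lborel. f x = g x"
proof -
  define d where "d = (\<lambda>x. f x - g x)"
  have d: "integrable lborel d" and supp: "\<And>x. x \<notin> {0..T} \<Longrightarrow> d x = 0"
    unfolding d_def using has_ac_derivD(1,2)[OF F] has_ac_derivD(1,2)[OF G] by auto
  have inside: "indef_integral d t = 0" if "t \<in> {0..T}" for t
    using has_ac_derivD(3)[OF F that] has_ac_derivD(3)[OF G that] has_ac_derivD(1)[OF F] has_ac_derivD(1)[OF G]
    unfolding d_def by (simp add: indef_integral_diff)
  have total: "integral\<^sup>L lborel d = 0"
    using indef_integral_beyond[OF supp order_refl] inside[of T] \<open>0 \<le> T\<close> by simp
  have "indef_integral d t = 0" for t
  proof (cases "t < 0")
    case True
    then have "(\<lambda>s. d s * indicator {..t} s) = (\<lambda>_. 0)"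
      using supp by (auto simp: indicator_def fun_eq_iff)
    then show ?thesis unfolding indef_integral_def by simp
  next
    case False
    show ?thesis
    proof (cases "t \<le> T")
      case True
      with False show ?thesis using inside by simp
    next
      case False
      then show ?thesis using indef_integral_beyond[of T d t, OF supp] total by simp
    qed
  qed
  moreover have "(\<integral>y. d y * indicator {x<..} y \<partial>lborel) = integral\<^sup>L lborel d - indef_integral d x" for x
  proof -
    have "(\<integral>y. d y * indicator {x<..} y \<partial>lborel) = (\<integral>y. d y - d y * indicator {..x} y \<partial>lborel)"
      by (intro Bochner_Integration.integral_cong) (auto simp: indicator_def)
    then show ?thesis using d by (simp add: indef_integral_def integrable_real_mult_indicator)
  qed
  ultimately have "AE x in lborel. d x = 0"
    using total by (intro AE_zero_if_integral_greaterThan_zero[OF d]) simp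
  then show ?thesis unfolding d_def by (rule eventually_mono) simp
qed

section \<open>The space \<open>H\<^sup>1(0,T)\<close>\<close>

lemma has_H1_deriv_dH1:
  assumes "H1 T v"
  shows "has_H1_deriv T v (dH1 T v)"
  using assms unfolding H1_def dH1_def by (rule someI_ex)

lemma has_H1_deriv_square_integrable:
  assumes "has_H1_deriv T v g"
  shows "g \<in> borel_measurable borel" "integrable lborel (\<lambda>x. (g x * indicator {0..T} x)\<^sup>2)"
proof -
  show "g \<in> borel_measurable borel" using assms unfolding has_H1_deriv_def by simp
  have "(\<lambda>x. (g x * indicator {0..T} x)\<^sup>2) = (\<lambda>x. indicator {0..T} x *\<^sub>R (g x)\<^sup>2)"
    by (auto simp: indicator_def fun_eq_iff)
  then show "integrable lborel (\<lambda>x. (g x * indicator {0..T} x)\<^sup>2)"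
    using assms unfolding has_H1_deriv_def set_integrable_def by simp
qed

lemma integrable_H1_deriv_mult:
  assumes "has_H1_deriv T v g" "has_H1_deriv T w h"
  shows "integrable lborel (\<lambda>x. (g x * indicator {0..T} x) * (h x * indicator {0..T} x))"
  using has_H1_deriv_square_integrable[OF assms(1)] has_H1_deriv_square_integrable[OF assms(2)]
  by (intro integrable_mult_square_integrable) auto

lemma has_H1_deriv_imp_has_ac_deriv:
  assumes "has_H1_deriv T v g"
  shows "has_ac_deriv T v (\<lambda>s. g s * indicator {0..T} s)"
  unfolding has_ac_deriv_def
proof (intro conjI ballI allI impI)
  note g = has_H1_deriv_square_integrable[OF assms]
  have "(\<lambda>x. (indicator {0..T} x :: real)\<^sup>2) = indicator {0..T}"
    by (auto simp: indicator_def fun_eq_iff)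
  then have "integrable lborel (\<lambda>x. (g x * indicator {0..T} x) * indicator {0..T} x)"
    using g borel_integrable_atLeastAtMost[of 0 T "\<lambda>_. 1"]
    by (intro integrable_mult_square_integrable) auto
  moreover have "(\<lambda>x. (g x * indicator {0..T} x) * indicator {0..T} x) = (\<lambda>s. g s * indicator {0..T} s)"
    by (auto simp: indicator_def fun_eq_iff)
  ultimately show "integrable lborel (\<lambda>s. g s * indicator {0..T} s)" by simp
  show "g x * indicator {0..T} x = 0" if "x \<notin> {0..T}" for x using that by simp
  fix t assume t: "t \<in> {0..T}"
  have "v t = v 0 + (LINT s:{0..t}|lborel. g s)" using assms t unfolding has_H1_deriv_def by blast
  also have "(LINT s:{0..t}|lborel. g s) = indef_integral (\<lambda>s. g s * indicator {0..T} s) t"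
    unfolding set_lebesgue_integral_def indef_integral_def using t
    by (intro Bochner_Integration.integral_cong) (auto simp: indicator_def)
  finally show "v t = v 0 + indef_integral (\<lambda>s. g s * indicator {0..T} s) t" .
qed

lemma has_ac_deriv_imp_has_H1_deriv:
  assumes F: "has_ac_deriv T F f" and sq: "integrable lborel (\<lambda>x. (f x)\<^sup>2)"
  shows "has_H1_deriv T F f"
  unfolding has_H1_deriv_def
proof (intro conjI ballI)
  show "f \<in> borel_measurable lborel" using has_ac_derivD(1)[OF F] by auto
  show "set_integrable lborel {0..T} (\<lambda>t. (f t)\<^sup>2)"
    unfolding set_integrable_def using sq by (intro integrable_mult_indicator) auto
  fix t assume t: "t \<in> {0..T}"
  have "(LINT s:{0..t}|lborel. f s) = indef_integral f t"
    unfolding set_lebesgue_integral_def indef_integral_def using t has_ac_derivD(2)[OF F]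
    by (intro Bochner_Integration.integral_cong) (auto simp: indicator_def)
  then show "F t = F 0 + (LINT s:{0..t}|lborel. f s)" using has_ac_derivD(3)[OF F t] by simp
qed

lemma dH1_AE_eq:
  assumes F: "has_ac_deriv T F f" and sq: "integrable lborel (\<lambda>x. (f x)\<^sup>2)" and "0 \<le> T"
  shows "AE x in lborel. dH1 T F x * indicator {0..T} x = f x"
proof -
  have "H1 T F" using has_ac_deriv_imp_has_H1_deriv[OF F sq] unfolding H1_def by blast
  then have "has_ac_deriv T F (\<lambda>x. dH1 T F x * indicator {0..T} x)"
    by (intro has_H1_deriv_imp_has_ac_deriv has_H1_deriv_dH1)
  from has_ac_deriv_unique[OF this F \<open>0 \<le> T\<close>] show ?thesis .
qed

lemma integrable_square_ac_minus_H1_deriv: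
  assumes h: "has_ac_deriv T h h'" and g: "has_H1_deriv T v g"
  shows "integrable lborel (\<lambda>s. ((h s - g s) * indicator {0..T} s)\<^sup>2)"
proof -
  define g' where "g' = (\<lambda>s. g s * indicator {0..T} s)"
  have "integrable lborel (\<lambda>s. h s * h s * indicator {0..T} s)"
    by (rule integrable_has_ac_deriv_mult_indicator[OF h h])
  moreover have "integrable lborel (\<lambda>s. g' s * h s)"
    using has_ac_derivD(1,2)[OF has_H1_deriv_imp_has_ac_deriv[OF g]] unfolding g'_def
    by (intro integrable_mult_has_ac_deriv[OF h]) auto
  moreover have "integrable lborel (\<lambda>s. (g' s)\<^sup>2)"
    using has_H1_deriv_square_integrable[OF g] unfolding g'_def by simp
  moreover have "((h s - g s) * indicator {0..T} s)\<^sup>2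
      = h s * h s * indicator {0..T} s - 2 * (g' s * h s) + (g' s)\<^sup>2" for s
    by (auto simp: g'_def indicator_def power2_eq_square algebra_simps)
  ultimately show ?thesis by simp
qed

lemma H1_square_integrable:
  assumes "H1 T v"
  shows "set_integrable lborel {0..T} (\<lambda>t. (v t)\<^sup>2)" "set_borel_measurable lborel {0..T} v"
    and "set_integrable lborel {0..T} (\<lambda>t. (dH1 T v t)\<^sup>2)" "set_borel_measurable lborel {0..T} (dH1 T v)"
proof -
  have d: "has_H1_deriv T v (dH1 T v)" by (rule has_H1_deriv_dH1[OF assms(1)])
  note v = has_H1_deriv_imp_has_ac_deriv[OF d]
  show "set_integrable lborel {0..T} (\<lambda>t. (dH1 T v t)\<^sup>2)" using d unfolding has_H1_deriv_def by blast
  have [measurable]: "dH1 T v \<in> borel_measurable borel"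
    by (rule has_H1_deriv_square_integrable(1)[OF d])
  show "set_borel_measurable lborel {0..T} (dH1 T v)"
    unfolding set_borel_measurable_def by measurable
  have "integrable lborel (\<lambda>t. v t * v t * indicator {0..T} t)"
    by (rule integrable_has_ac_deriv_mult_indicator[OF v v])
  then show "set_integrable lborel {0..T} (\<lambda>t. (v t)\<^sup>2)"
    unfolding set_integrable_def by (simp add: power2_eq_square mult.commute)
  have "integrable lborel (\<lambda>t. indicator {0..T} t * v t)"
    using borel_integrable_atLeastAtMost[of 0 T "\<lambda>_. 1"] by (intro integrable_mult_has_ac_deriv[OF v]) auto
  then show "set_borel_measurable lborel {0..T} v"
    unfolding set_borel_measurable_def by simp
qed

section \<open>The operator \<open>T_mu\<close>\<close>

lemma cos_sin_rotation:
  fixes x p q :: real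
  shows "cos x * (cos x * p + sin x * q) + sin x * (sin x * p - cos x * q) = p"
    and "sin x * (cos x * p + sin x * q) - cos x * (sin x * p - cos x * q) = q"
proof -
  have "cos x * (cos x * p + sin x * q) + sin x * (sin x * p - cos x * q)
      = (cos x * cos x + sin x * sin x) * p"
    and "sin x * (cos x * p + sin x * q) - cos x * (sin x * p - cos x * q)
      = (cos x * cos x + sin x * sin x) * q"
    by (simp_all add: algebra_simps del: sin_cos_squared_add3)
  then show "cos x * (cos x * p + sin x * q) + sin x * (sin x * p - cos x * q) = p"
    and "sin x * (cos x * p + sin x * q) - cos x * (sin x * p - cos x * q) = q"
    by simp_all
qed

lemma integrable_cos_sin_mult:
  fixes f :: "real \<Rightarrow> real"
  assumes "integrable lborel f"
  shows "integrable lborel (\<lambda>s. cos (k * s) * f s)" "integrable lborel (\<lambda>s. sin (k * s) * f s)"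
proof -
  have "integrable lborel (\<lambda>s. f s * cos (k * s))" "integrable lborel (\<lambda>s. f s * sin (k * s))"
    using assms by (auto intro!: integrable_mult_bounded[where C=1])
  then show "integrable lborel (\<lambda>s. cos (k * s) * f s)" "integrable lborel (\<lambda>s. sin (k * s) * f s)"
    by (simp_all add: mult.commute)
qed

lemma integral_cos_sin_diff:
  fixes p q :: "real \<Rightarrow> real"
  assumes p: "integrable lborel p" and q: "integrable lborel q" and S: "S \<in> sets lborel"
  shows "(\<integral>s. indicator S s * (cos (k * (t - s)) * p s - sin (k * (t - s)) * q s) \<partial>lborel)
    = cos (k * t) * (\<integral>s. indicator S s * (cos (k * s) * p s + sin (k * s) * q s) \<partial>lborel)
      + sin (k * t) * (\<integral>s. indicator S s * (sin (k * s) * p s - cos (k * s) * q s) \<partial>lborel)"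
proof -
  have "integrable lborel (\<lambda>s. cos (k * s) * p s + sin (k * s) * q s)"
    and "integrable lborel (\<lambda>s. sin (k * s) * p s - cos (k * s) * q s)"
    using integrable_cos_sin_mult[OF p] integrable_cos_sin_mult[OF q] by simp_all
  from this[THEN integrable_mult_indicator[OF S]]
  have "integrable lborel (\<lambda>s. indicator S s * (cos (k * s) * p s + sin (k * s) * q s))"
    and "integrable lborel (\<lambda>s. indicator S s * (sin (k * s) * p s - cos (k * s) * q s))"
    by simp_all
  moreover have "(\<lambda>s. indicator S s * (cos (k * (t - s)) * p s - sin (k * (t - s)) * q s))
    = (\<lambda>s. cos (k * t) * (indicator S s * (cos (k * s) * p s + sin (k * s) * q s))
      + sin (k * t) * (indicator S s * (sin (k * s) * p s - cos (k * s) * q s)))"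
    by (simp add: fun_eq_iff cos_diff sin_diff algebra_simps)
  ultimately show ?thesis by simp
qed

lemma has_ac_deriv_rotation:
  assumes A: "has_ac_deriv T A (\<lambda>s. - a s)" and B: "has_ac_deriv T B (\<lambda>s. - b s)"
  shows "has_ac_deriv T (\<lambda>t. cos (k * t) * A t + sin (k * t) * B t)
      (\<lambda>s. k * (cos (k * s) * B s - sin (k * s) * A s) * indicator {0..T} s
        - (cos (k * s) * a s + sin (k * s) * b s))"
    and "has_ac_deriv T (\<lambda>t. k * (cos (k * t) * B t - sin (k * t) * A t))
      (\<lambda>s. k * (sin (k * s) * a s - cos (k * s) * b s)
        - k * k * (cos (k * s) * A s + sin (k * s) * B s) * indicator {0..T} s)"
proof -
  show "has_ac_deriv T (\<lambda>t. cos (k * t) * A t + sin (k * t) * B t)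
      (\<lambda>s. k * (cos (k * s) * B s - sin (k * s) * A s) * indicator {0..T} s
        - (cos (k * s) * a s + sin (k * s) * b s))"
    using has_ac_deriv_add[OF has_ac_deriv_cos_mult[OF A, of k] has_ac_deriv_sin_mult[OF B, of k]]
    by (rule has_ac_deriv_cong) (auto simp: algebra_simps)
  show "has_ac_deriv T (\<lambda>t. k * (cos (k * t) * B t - sin (k * t) * A t))
      (\<lambda>s. k * (sin (k * s) * a s - cos (k * s) * b s)
        - k * k * (cos (k * s) * A s + sin (k * s) * B s) * indicator {0..T} s)"
    using has_ac_deriv_cmult[OF has_ac_deriv_diff[OF has_ac_deriv_cos_mult[OF B, of k]
        has_ac_deriv_sin_mult[OF A, of k]], of k]
    by (rule has_ac_deriv_cong) (auto simp: algebra_simps)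
qed

text \<open>Variation of constants for \<open>z'' + k\<^sup>2 z\<close>: by the angle-sum formulas
  \<open>Z t = cos (k t) A t + sin (k t) B t\<close> with \<open>A\<close>, \<open>B\<close> integrals over \<open>[t,T]\<close>, and
  \<open>h = k (cos (k t) B t - sin (k t) A t)\<close> is the second component of this rotation.\<close>

lemma oscillator_integral_has_ac_deriv:
  fixes p q :: "real \<Rightarrow> real" and k :: real
  assumes p: "integrable lborel p" "\<And>x. x \<notin> {0..T} \<Longrightarrow> p x = 0"
    and q: "integrable lborel q" "\<And>x. x \<notin> {0..T} \<Longrightarrow> q x = 0"
  defines "Z \<equiv> \<lambda>t. \<integral>s. indicator {t..T} s * (cos (k * (t - s)) * p s - sin (k * (t - s)) * q s) \<partial>lborel"
  obtains h where "has_ac_deriv T Z (\<lambda>s. h s * indicator {0..T} s - p s)"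
    "has_ac_deriv T h (\<lambda>s. k * q s - k * k * Z s * indicator {0..T} s)" "h T = 0"
proof -
  define a where "a = (\<lambda>s. cos (k * s) * p s + sin (k * s) * q s)"
  define b where "b = (\<lambda>s. sin (k * s) * p s - cos (k * s) * q s)"
  have a: "integrable lborel a" and b: "integrable lborel b"
    unfolding a_def b_def using integrable_cos_sin_mult[OF p(1)] integrable_cos_sin_mult[OF q(1)] by simp_all
  have a_supp: "\<And>x. x \<notin> {0..T} \<Longrightarrow> a x = 0" and b_supp: "\<And>x. x \<notin> {0..T} \<Longrightarrow> b x = 0"
    by (simp_all add: a_def b_def p(2) q(2))
  define A where "A = (\<lambda>t. \<integral>s. indicator {t..T} s * a s \<partial>lborel)"
  define B where "B = (\<lambda>t. \<integral>s. indicator {t..T} s * b s \<partial>lborel)"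
  have A: "has_ac_deriv T A (\<lambda>s. - a s)"
    unfolding A_def by (rule has_ac_deriv_integral_atLeastAtMost[OF a a_supp])
  have B: "has_ac_deriv T B (\<lambda>s. - b s)"
    unfolding B_def by (rule has_ac_deriv_integral_atLeastAtMost[OF b b_supp])
  have Z: "Z = (\<lambda>t. cos (k * t) * A t + sin (k * t) * B t)"
    unfolding Z_def A_def B_def a_def b_def by (simp add: integral_cos_sin_diff[OF p(1) q(1)] fun_eq_iff)
  define h where "h = (\<lambda>t. k * (cos (k * t) * B t - sin (k * t) * A t))"
  have "has_ac_deriv T Z (\<lambda>s. h s * indicator {0..T} s - p s)"
    using has_ac_deriv_rotation(1)[OF A B, of k]
  proof (rule has_ac_deriv_cong)
    show "Z t = cos (k * t) * A t + sin (k * t) * B t" for t by (simp add: Z)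
    show "h s * indicator {0..T} s - p s = k * (cos (k * s) * B s - sin (k * s) * A s)
        * indicator {0..T} s - (cos (k * s) * a s + sin (k * s) * b s)" for s
      unfolding a_def b_def cos_sin_rotation by (simp add: h_def)
  qed
  moreover have "has_ac_deriv T h (\<lambda>s. k * q s - k * k * Z s * indicator {0..T} s)"
    using has_ac_deriv_rotation(2)[OF A B, of k]
  proof (rule has_ac_deriv_cong)
    show "k * q s - k * k * Z s * indicator {0..T} s = k * (sin (k * s) * a s - cos (k * s) * b s)
        - k * k * (cos (k * s) * A s + sin (k * s) * B s) * indicator {0..T} s" for s
      unfolding a_def b_def cos_sin_rotation by (simp add: Z)
  qed (simp add: h_def)
  moreover have "A T = 0" "B T = 0"
    unfolding A_def B_def using AE_lborel_singleton[of T]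
    by (auto intro!: integral_eq_zero_AE elim!: eventually_mono simp: indicator_def)
  then have "h T = 0" by (simp add: h_def)
  ultimately show ?thesis by (rule that)
qed

text \<open>With \<open>k = sqrt mu\<close>, \<open>T_mu w\<close> is the integral above for \<open>p = w'\<close> and \<open>q = k w\<close>.\<close>

lemma T_mu_derivative:
  assumes "H1 T w" and "0 \<le> \<mu>"
  obtains h where "has_ac_deriv T (T_mu T \<mu> w) (\<lambda>s. (h s - dH1 T w s) * indicator {0..T} s)"
    "has_ac_deriv T h (\<lambda>s. \<mu> * (w s - T_mu T \<mu> w s) * indicator {0..T} s)" "h T = 0"
proof -
  define k where "k = sqrt \<mu>"
  define p where "p = (\<lambda>s. dH1 T w s * indicator {0..T} s)"
  define q where "q = (\<lambda>s. k * (w s * indicator {0..T} s))"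
  have w: "has_ac_deriv T w p"
    unfolding p_def by (rule has_H1_deriv_imp_has_ac_deriv[OF has_H1_deriv_dH1[OF \<open>H1 T w\<close>]])
  have "integrable lborel (\<lambda>s. indicator {0..T} s * w s)"
    using borel_integrable_atLeastAtMost[of 0 T "\<lambda>_. 1"] by (intro integrable_mult_has_ac_deriv[OF w]) auto
  then have q: "integrable lborel q" by (simp add: q_def mult.commute)
  have q_supp: "\<And>x. x \<notin> {0..T} \<Longrightarrow> q x = 0" by (simp add: q_def)
  define Z where "Z = (\<lambda>t. \<integral>s. indicator {t..T} s * (cos (k * (t - s)) * p s - sin (k * (t - s)) * q s) \<partial>lborel)"
  obtain h where Z: "has_ac_deriv T Z (\<lambda>s. h s * indicator {0..T} s - p s)"
    and h: "has_ac_deriv T h (\<lambda>s. k * q s - k * k * Z s * indicator {0..T} s)" and "h T = 0"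
    using oscillator_integral_has_ac_deriv[OF has_ac_derivD(1,2)[OF w] q q_supp, where k = k]
    unfolding Z_def by blast
  have T_mu_eq: "T_mu T \<mu> w t = Z t" if "t \<in> {0..T}" for t
    unfolding T_mu_def set_lebesgue_integral_def Z_def k_def[symmetric] using that
    by (intro Bochner_Integration.integral_cong) (auto simp: p_def q_def indicator_def)
  have "has_ac_deriv T (T_mu T \<mu> w) (\<lambda>s. (h s - dH1 T w s) * indicator {0..T} s)"
    using Z by (rule has_ac_deriv_cong) (simp_all add: T_mu_eq p_def algebra_simps)
  moreover have "has_ac_deriv T h (\<lambda>s. \<mu> * (w s - T_mu T \<mu> w s) * indicator {0..T} s)"
    using h
  proof (rule has_ac_deriv_cong)
    show "\<mu> * (w s - T_mu T \<mu> w s) * indicator {0..T} s = k * q s - k * k * Z s * indicator {0..T} s" for s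
      using T_mu_eq[of s] \<open>0 \<le> \<mu>\<close> by (cases "s \<in> {0..T}") (simp_all add: q_def k_def algebra_simps)
  qed simp
  ultimately show ?thesis using \<open>h T = 0\<close> by (rule that)
qed

lemma T_mu_in_H1:
  assumes "H1 T w" "0 \<le> T" "0 \<le> \<mu>"
  obtains h where "has_ac_deriv T (T_mu T \<mu> w) (\<lambda>s. (h s - dH1 T w s) * indicator {0..T} s)"
    "H1 T (T_mu T \<mu> w)"
    "AE s in lborel. dH1 T (T_mu T \<mu> w) s * indicator {0..T} s = (h s - dH1 T w s) * indicator {0..T} s"
    "has_ac_deriv T h (\<lambda>s. \<mu> * (w s - T_mu T \<mu> w s) * indicator {0..T} s)" "h T = 0"
proof -
  obtain h where z: "has_ac_deriv T (T_mu T \<mu> w) (\<lambda>s. (h s - dH1 T w s) * indicator {0..T} s)"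
    and h: "has_ac_deriv T h (\<lambda>s. \<mu> * (w s - T_mu T \<mu> w s) * indicator {0..T} s)" and "h T = 0"
    using T_mu_derivative[OF assms(1,3)] by blast
  note sq = integrable_square_ac_minus_H1_deriv[OF h has_H1_deriv_dH1[OF assms(1)]]
  have "H1 T (T_mu T \<mu> w)" using has_ac_deriv_imp_has_H1_deriv[OF z sq] unfolding H1_def by blast
  from that[OF z this dH1_AE_eq[OF z sq assms(2)] h \<open>h T = 0\<close>] show ?thesis .
qed

lemma b_mu_eq_integral:
  assumes u: "H1 T u" and z: "H1 T z"
    and f: "AE s in lborel. dH1 T z s * indicator {0..T} s = f s" "f \<in> borel_measurable borel"
  shows "b_mu T \<mu> u z = (\<integral>s. - (dH1 T u s * indicator {0..T} s * f s)
    + \<mu> * (u s * z s * indicator {0..T} s) \<partial>lborel)"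
proof -
  define U where "U = (\<lambda>s. indicator {0..T} s * u s)"
  define Z where "Z = (\<lambda>s. indicator {0..T} s * z s)"
  have [measurable]: "dH1 T u \<in> borel_measurable borel" "dH1 T z \<in> borel_measurable borel" "f \<in> borel_measurable borel"
    using has_H1_deriv_square_integrable(1)[OF has_H1_deriv_dH1] u z f(2) by blast+
  have [measurable]: "U \<in> borel_measurable borel" "Z \<in> borel_measurable borel"
    using H1_square_integrable(2)[OF u] H1_square_integrable(2)[OF z]
    unfolding set_borel_measurable_def U_def Z_def by simp_all
  have "b_mu T \<mu> u z = (\<integral>s. - (dH1 T u s * indicator {0..T} s * (dH1 T z s * indicator {0..T} s))
      + \<mu> * (U s * Z s) \<partial>lborel)"
    unfolding b_mu_def set_lebesgue_integral_def U_def Z_def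
    by (intro Bochner_Integration.integral_cong) (auto simp: indicator_def)
  also have "\<dots> = (\<integral>s. - (dH1 T u s * indicator {0..T} s * f s) + \<mu> * (U s * Z s) \<partial>lborel)"
  proof (rule integral_cong_AE)
    show "AE s in lborel. - (dH1 T u s * indicator {0..T} s * (dH1 T z s * indicator {0..T} s))
        + \<mu> * (U s * Z s) = - (dH1 T u s * indicator {0..T} s * f s) + \<mu> * (U s * Z s)"
      using f(1) by (rule eventually_mono) simp
    show "(\<lambda>s. - (dH1 T u s * indicator {0..T} s * (dH1 T z s * indicator {0..T} s))
        + \<mu> * (U s * Z s)) \<in> borel_measurable lborel"
      by (intro borel_measurable_add borel_measurable_times borel_measurable_uminus) simp_all
    show "(\<lambda>s. - (dH1 T u s * indicator {0..T} s * f s) + \<mu> * (U s * Z s)) \<in> borel_measurable lborel"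
      by (intro borel_measurable_add borel_measurable_times borel_measurable_uminus) simp_all
  qed
  also have "\<dots> = (\<integral>s. - (dH1 T u s * indicator {0..T} s * f s) + \<mu> * (u s * z s * indicator {0..T} s) \<partial>lborel)"
    by (intro Bochner_Integration.integral_cong) (auto simp: U_def Z_def indicator_def)
  finally show ?thesis .
qed

lemma b_mu_T_mu:
  assumes "0 \<le> T" "0 \<le> \<mu>" "H1_0l T u" "H1 T w"
  shows "b_mu T \<mu> u (T_mu T \<mu> w) =
    (LINT t:{0..T}|lborel. dH1 T u t * dH1 T w t) + \<mu> * (LINT t:{0..T}|lborel. u t * w t)"
proof -
  have "H1 T u" "u 0 = 0" using assms(3) by (auto simp: H1_0l_def)
  have hu: "has_H1_deriv T u (dH1 T u)" and hw: "has_H1_deriv T w (dH1 T w)"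
    by (rule has_H1_deriv_dH1, fact)+
  define gu where "gu = (\<lambda>s. dH1 T u s * indicator {0..T} s)"
  define gw where "gw = (\<lambda>s. dH1 T w s * indicator {0..T} s)"
  have u: "has_ac_deriv T u gu" and w: "has_ac_deriv T w gw"
    unfolding gu_def gw_def by (rule has_H1_deriv_imp_has_ac_deriv, fact)+
  define z where "z = T_mu T \<mu> w"
  obtain h where z: "has_ac_deriv T z (\<lambda>s. (h s - dH1 T w s) * indicator {0..T} s)" and "H1 T z"
    and dz: "AE s in lborel. dH1 T z s * indicator {0..T} s = (h s - dH1 T w s) * indicator {0..T} s"
    and h: "has_ac_deriv T h (\<lambda>s. \<mu> * (w s - z s) * indicator {0..T} s)" and "h T = 0"
    using T_mu_in_H1[OF \<open>H1 T w\<close> assms(1,2)] unfolding z_def by blast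
  have i_guh: "integrable lborel (\<lambda>s. gu s * h s)"
    using has_ac_derivD(1,2)[OF u] by (intro integrable_mult_has_ac_deriv[OF h])
  have i_gugw: "integrable lborel (\<lambda>s. gu s * gw s)"
    unfolding gu_def gw_def by (rule integrable_H1_deriv_mult[OF hu hw])
  have i_uw: "integrable lborel (\<lambda>s. u s * w s * indicator {0..T} s)"
    and i_uz: "integrable lborel (\<lambda>s. u s * z s * indicator {0..T} s)"
    by (rule integrable_has_ac_deriv_mult_indicator[OF u w], rule integrable_has_ac_deriv_mult_indicator[OF u z])
  have "(\<integral>s. gu s * h s \<partial>lborel) + (\<integral>s. u s * (\<mu> * (w s - z s) * indicator {0..T} s) \<partial>lborel) = 0"
    using integration_by_parts_has_ac_deriv[OF u h assms(1)] \<open>u 0 = 0\<close> \<open>h T = 0\<close> by simp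
  moreover have "(\<lambda>s. u s * (\<mu> * (w s - z s) * indicator {0..T} s))
      = (\<lambda>s. \<mu> * (u s * w s * indicator {0..T} s) - \<mu> * (u s * z s * indicator {0..T} s))"
    by (simp add: fun_eq_iff algebra_simps)
  ultimately have parts: "(\<integral>s. gu s * h s \<partial>lborel) + \<mu> * (\<integral>s. u s * w s * indicator {0..T} s \<partial>lborel)
      - \<mu> * (\<integral>s. u s * z s * indicator {0..T} s \<partial>lborel) = 0"
    using i_uw i_uz by simp
  have "b_mu T \<mu> u z = (\<integral>s. - (gu s * ((h s - dH1 T w s) * indicator {0..T} s))
      + \<mu> * (u s * z s * indicator {0..T} s) \<partial>lborel)"
    unfolding gu_def using has_ac_derivD(1)[OF z]
    by (intro b_mu_eq_integral \<open>H1 T u\<close> \<open>H1 T z\<close> dz) auto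
  also have "\<dots> = (\<integral>s. gu s * gw s - gu s * h s + \<mu> * (u s * z s * indicator {0..T} s) \<partial>lborel)"
    by (intro Bochner_Integration.integral_cong) (auto simp: gu_def gw_def indicator_def algebra_simps)
  also have "\<dots> = (\<integral>s. gu s * gw s \<partial>lborel) - (\<integral>s. gu s * h s \<partial>lborel)
      + \<mu> * (\<integral>s. u s * z s * indicator {0..T} s \<partial>lborel)"
    using i_gugw i_guh i_uz by simp
  finally have b: "b_mu T \<mu> u z = \<dots>" .
  have uw: "(LINT t:{0..T}|lborel. dH1 T u t * dH1 T w t) = (\<integral>s. gu s * gw s \<partial>lborel)"
    "(LINT t:{0..T}|lborel. u t * w t) = (\<integral>s. u s * w s * indicator {0..T} s \<partial>lborel)"
    unfolding set_lebesgue_integral_def gu_def gw_def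
    by (auto intro!: Bochner_Integration.integral_cong simp: indicator_def)
  show ?thesis
    unfolding z_def[symmetric] b uw using parts by linarith
qed

section \<open>Cauchy-Schwarz inequalities\<close>

lemma sq_le_mult_if_quadratic_nonneg:
  fixes F G X :: real
  assumes nonneg: "\<And>l. 0 \<le> F + 2 * l * X + l\<^sup>2 * G" and "0 \<le> G"
  shows "X\<^sup>2 \<le> F * G"
proof (cases "G = 0")
  case True
  have "X = 0"
  proof (rule ccontr)
    assume "X \<noteq> 0"
    then have "F + 2 * (- (F + 1) / (2 * X)) * X + (- (F + 1) / (2 * X))\<^sup>2 * G = -1"
      using True by (simp add: field_simps)
    then show False using nonneg[of "- (F + 1) / (2 * X)"] by simp
  qed
  then show ?thesis using True by simp
next
  case False
  then have "0 < G" using \<open>0 \<le> G\<close> by simp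
  have "F + 2 * (- X / G) * X + (- X / G)\<^sup>2 * G = F - X\<^sup>2 / G"
    using \<open>0 < G\<close> by (simp add: field_simps power2_eq_square)
  then have "X\<^sup>2 / G \<le> F" using nonneg[of "- X / G"] by simp
  then show ?thesis using \<open>0 < G\<close> by (simp add: field_simps)
qed

lemma Cauchy_Schwarz_integral:
  fixes f g :: "'a \<Rightarrow> real"
  assumes [measurable]: "f \<in> borel_measurable M" "g \<in> borel_measurable M"
    and ff: "integrable M (\<lambda>x. (f x)\<^sup>2)" and gg: "integrable M (\<lambda>x. (g x)\<^sup>2)"
  shows "(\<integral>x. f x * g x \<partial>M) \<le> sqrt (\<integral>x. (f x)\<^sup>2 \<partial>M) * sqrt (\<integral>x. (g x)\<^sup>2 \<partial>M)"
proof -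
  define F G X where "F = (\<integral>x. (f x)\<^sup>2 \<partial>M)" and "G = (\<integral>x. (g x)\<^sup>2 \<partial>M)" and "X = (\<integral>x. f x * g x \<partial>M)"
  have fg: "integrable M (\<lambda>x. f x * g x)"
    by (rule integrable_mult_square_integrable[OF assms])
  have "0 \<le> F + 2 * l * X + l\<^sup>2 * G" for l
  proof -
    have "0 \<le> (\<integral>x. (f x + l * g x)\<^sup>2 \<partial>M)" by (rule integral_nonneg_AE) simp
    also have "(\<lambda>x. (f x + l * g x)\<^sup>2) = (\<lambda>x. (f x)\<^sup>2 + (2 * l) * (f x * g x) + l\<^sup>2 * (g x)\<^sup>2)"
      by (simp add: fun_eq_iff power2_eq_square algebra_simps)
    also have "integral\<^sup>L M \<dots> = F + 2 * l * X + l\<^sup>2 * G"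
      using fg ff gg by (simp add: F_def G_def X_def)
    finally show ?thesis .
  qed
  moreover have "0 \<le> G" unfolding G_def by (rule integral_nonneg_AE) simp
  ultimately have "X\<^sup>2 \<le> F * G" by (rule sq_le_mult_if_quadratic_nonneg)
  then have "\<bar>X\<bar> \<le> sqrt F * sqrt G"
    using real_sqrt_le_mono[of "X\<^sup>2" "F * G"] by (simp add: real_sqrt_mult)
  then show ?thesis unfolding F_def G_def X_def by linarith
qed

lemma Cauchy_Schwarz_set_integral:
  fixes f g :: "'a \<Rightarrow> real"
  assumes "set_borel_measurable M A f" "set_borel_measurable M A g"
    and "set_integrable M A (\<lambda>x. (f x)\<^sup>2)" "set_integrable M A (\<lambda>x. (g x)\<^sup>2)"
  shows "(LINT x:A|M. f x * g x) \<le> sqrt (LINT x:A|M. (f x)\<^sup>2) * sqrt (LINT x:A|M. (g x)\<^sup>2)"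
proof -
  have sq: "indicator A x *\<^sub>R (h x)\<^sup>2 = (indicator A x *\<^sub>R h x)\<^sup>2" for h :: "'a \<Rightarrow> real" and x
    by (simp add: indicator_def)
  have "(\<lambda>x. indicator A x *\<^sub>R (f x * g x)) = (\<lambda>x. (indicator A x *\<^sub>R f x) * (indicator A x *\<^sub>R g x))"
    by (auto simp: indicator_def fun_eq_iff)
  then show ?thesis
    using Cauchy_Schwarz_integral[OF assms[unfolded set_borel_measurable_def set_integrable_def sq]]
    unfolding set_lebesgue_integral_def sq by simp
qed

lemma add_le_sqrt_mult_sqrt:
  fixes F1 F2 G1 G2 X1 X2 :: real
  assumes "0 \<le> F1" "0 \<le> F2" "0 \<le> G1" "0 \<le> G2"
    and "X1 \<le> sqrt F1 * sqrt G1" "X2 \<le> sqrt F2 * sqrt G2"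
  shows "X1 + X2 \<le> sqrt (F1 + F2) * sqrt (G1 + G2)"
proof -
  define a1 a2 b1 b2 where "a1 = sqrt F1" and "a2 = sqrt F2" and "b1 = sqrt G1" and "b2 = sqrt G2"
  have "(a1 * b1 + a2 * b2)\<^sup>2 \<le> (a1\<^sup>2 + a2\<^sup>2) * (b1\<^sup>2 + b2\<^sup>2)"
  proof -
    have "(a1\<^sup>2 + a2\<^sup>2) * (b1\<^sup>2 + b2\<^sup>2) - (a1 * b1 + a2 * b2)\<^sup>2 = (a1 * b2 - a2 * b1)\<^sup>2"
      by (simp add: power2_eq_square algebra_simps)
    then show ?thesis by (metis diff_ge_0_iff_ge zero_le_power2)
  qed
  then have "a1 * b1 + a2 * b2 \<le> sqrt ((a1\<^sup>2 + a2\<^sup>2) * (b1\<^sup>2 + b2\<^sup>2))" by (rule real_le_rsqrt)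
  then have "a1 * b1 + a2 * b2 \<le> sqrt (F1 + F2) * sqrt (G1 + G2)"
    using assms(1-4) by (simp add: a1_def a2_def b1_def b2_def real_sqrt_mult)
  then show ?thesis using assms(5,6) unfolding a1_def a2_def b1_def b2_def by linarith
qed

lemma set_integral_square_nonneg: "0 \<le> (LINT x:A|M. (f x :: real)\<^sup>2)"
  unfolding set_lebesgue_integral_def by (rule integral_nonneg_AE) simp

lemma H1_inner_le_H1mu_norm:
  assumes "H1 T u" "H1 T w" "0 \<le> \<mu>"
  shows "(LINT t:{0..T}|lborel. dH1 T u t * dH1 T w t) + \<mu> * (LINT t:{0..T}|lborel. u t * w t)
    \<le> H1mu_norm T \<mu> u * H1mu_norm T \<mu> w"
proof -
  note u = H1_square_integrable[OF assms(1)] and w = H1_square_integrable[OF assms(2)]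
  have "(LINT t:{0..T}|lborel. dH1 T u t * dH1 T w t)
      \<le> sqrt (LINT t:{0..T}|lborel. (dH1 T u t)\<^sup>2) * sqrt (LINT t:{0..T}|lborel. (dH1 T w t)\<^sup>2)"
    using u w by (intro Cauchy_Schwarz_set_integral)
  moreover have "\<mu> * (LINT t:{0..T}|lborel. u t * w t)
      \<le> sqrt (\<mu> * (LINT t:{0..T}|lborel. (u t)\<^sup>2)) * sqrt (\<mu> * (LINT t:{0..T}|lborel. (w t)\<^sup>2))"
  proof -
    have "(LINT t:{0..T}|lborel. u t * w t)
        \<le> sqrt (LINT t:{0..T}|lborel. (u t)\<^sup>2) * sqrt (LINT t:{0..T}|lborel. (w t)\<^sup>2)"
      using u w by (intro Cauchy_Schwarz_set_integral)
    then have "\<mu> * (LINT t:{0..T}|lborel. u t * w t)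
        \<le> \<mu> * (sqrt (LINT t:{0..T}|lborel. (u t)\<^sup>2) * sqrt (LINT t:{0..T}|lborel. (w t)\<^sup>2))"
      using \<open>0 \<le> \<mu>\<close> by (rule mult_left_mono)
    also have "\<dots> = (sqrt \<mu> * sqrt \<mu>) * (sqrt (LINT t:{0..T}|lborel. (u t)\<^sup>2) * sqrt (LINT t:{0..T}|lborel. (w t)\<^sup>2))"
      using \<open>0 \<le> \<mu>\<close> by simp
    finally show ?thesis by (simp only: real_sqrt_mult mult_ac)
  qed
  ultimately show ?thesis
    unfolding H1mu_norm_def using set_integral_square_nonneg \<open>0 \<le> \<mu>\<close>
    by (intro add_le_sqrt_mult_sqrt) auto
qed

lemma H1mu_norm_square:
  assumes "0 \<le> \<mu>"
  shows "(H1mu_norm T \<mu> u)\<^sup>2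
    = (LINT t:{0..T}|lborel. (dH1 T u t)\<^sup>2) + \<mu> * (LINT t:{0..T}|lborel. (u t)\<^sup>2)"
  unfolding H1mu_norm_def
  using set_integral_square_nonneg[of lborel "{0..T}" "dH1 T u"] set_integral_square_nonneg[of lborel "{0..T}" u] assms
  by simp

theorem mainTheorem3:
  fixes T \<mu> :: real
  assumes "T > 0" and "\<mu> > 0"
  shows "(\<forall>u w. H1_0l T u \<and> H1_0l T w \<longrightarrow>
            b_mu T \<mu> u (T_mu T \<mu> w) =
              (LINT t:{0..T}|lborel. dH1 T u t * dH1 T w t) + \<mu> * (LINT t:{0..T}|lborel. u t * w t))
       \<and> (\<forall>u w. H1_0l T u \<and> H1_0l T w \<longrightarrow>
            b_mu T \<mu> u (T_mu T \<mu> w) \<le> H1mu_norm T \<mu> u * H1mu_norm T \<mu> w)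
       \<and> (\<forall>u. H1_0l T u \<longrightarrow> b_mu T \<mu> u (T_mu T \<mu> u) = (H1mu_norm T \<mu> u)^2)"
proof -
  have T: "0 \<le> T" and \<mu>: "0 \<le> \<mu>" using assms by simp_all
  have eq: "b_mu T \<mu> u (T_mu T \<mu> w) =
      (LINT t:{0..T}|lborel. dH1 T u t * dH1 T w t) + \<mu> * (LINT t:{0..T}|lborel. u t * w t)"
    if "H1_0l T u" "H1_0l T w" for u w
    using b_mu_T_mu[OF T \<mu> that(1)] that(2) by (simp add: H1_0l_def)
  moreover have "b_mu T \<mu> u (T_mu T \<mu> w) \<le> H1mu_norm T \<mu> u * H1mu_norm T \<mu> w"
    if "H1_0l T u" "H1_0l T w" for u w
    unfolding eq[OF that] using that by (intro H1_inner_le_H1mu_norm \<mu>) (simp_all add: H1_0l_def)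
  moreover have "b_mu T \<mu> u (T_mu T \<mu> u) = (H1mu_norm T \<mu> u)\<^sup>2" if "H1_0l T u" for u
    unfolding eq[OF that that] H1mu_norm_square[OF \<mu>] by (simp add: power2_eq_square)
  ultimately show ?thesis by blast
qed

end
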